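(* Let $p$ be a prime number, $\nu\ge 0$ an integer, and $N\ge 1$ an integer. Let $m,n$ be positive even integers with $m\ge n$, $m\equiv n\pmod{(p-1)p^{\nu}}$ and $m,n\not\equiv 0\pmod{p-1}$. If $$\mathrm{ord}_p(N-1)\ \ge\ \nu+1+\mathrm{ord}_p\Big(\prod_{k=0}^{m}(1+k)!\Big)+\max\{\mathrm{ord}_p(m),\mathrm{ord}_p(n)\},$$ then $$(1-p^{m-1})\frac{B_{N,m}}{m}\equiv(1-p^{n-1})\frac{B_{N,n}}{n}\pmod{p^{\nu+1}}.$$
   Context: For a positive integer $N$, the hypergeometric Bernoulli numbers $B_{N,n}$ are defined by $\frac{x^N/N!}{e^x-\sum_{n=0}^{N-1}x^n/n!}=\sum_{n\ge0} B_{N,n}\frac{x^n}{n!}$. $\mathrm{ord}_p$ denotes the $p$-adic valuation on $\mathbb{Q}$ (with $\mathrm{ord}_p(0)=\infty$); for rationals $a,b$, $a\equiv b\pmod{p^s}$ means $\mathrm{ord}_p(a-b)\ge s$. *)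

theory Defs
  imports "HOL-Computational_Algebra.Computational_Algebra" "HOL-Number_Theory.Number_Theory"
begin

definition hyp_bernoulli :: "nat \<Rightarrow> nat \<Rightarrow> rat" where
  "hyp_bernoulli N n = fact n * fps_nth
     ((fps_const (1 / fact N) * fps_X ^ N) /
      (fps_exp 1 - (\<Sum>k<N. fps_const (1 / fact k) * fps_X ^ k))) n"

text \<open>p-adic valuation of a nonzero rational (meaningless at 0; zero is handled separately).\<close>
definition qord :: "nat \<Rightarrow> rat \<Rightarrow> int" where
  "qord p x = (case quotient_of x of (a, b) \<Rightarrow>
      int (multiplicity (int p) a) - int (multiplicity (int p) b))"

definition qcong :: "nat \<Rightarrow> nat \<Rightarrow> rat \<Rightarrow> rat \<Rightarrow> bool" where
  "qcong p s a b \<longleftrightarrow> a - b = 0 \<or> qord p (a - b) \<ge> int s"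

end

theory Submission
  imports Defs
begin

text \<open>Write $B_{N,n} = n!\, b_N(n)$, where $b_N(n)$ are the coefficients of $1/A_N$ with
  $A_N(x) = \sum_j N!/(N+j)!\, x^j$. For $N = 1$ these are the Bernoulli numbers, and the
  congruence is Kummer's. It follows from Voronoi's identity: for a primitive root $c$ modulo $p$,
  $(c^k - 1)(1 - p^{k-1}) B_k / k$ is $p$-adically close to an integer sum that depends on $k$ only
  through powers $(ca \bmod p^s)^{k-1}$ of units, which by Euler's theorem are periodic in $k$
  modulo $p^{\nu+1}$ with period $(p-1)p^\nu$.

  If $N \equiv 1 \pmod{p^E}$, the $j$-th coefficients of $A_N$ and $A_1$ differ by
  $p^E / ((j+1)!)^2$ in valuation, and the recursion $b_N(k) = -\sum_{i \ge 1} a_N(i)\, b_N(k-i)$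
  propagates this to $\mathrm{ord}_p(b_N(k) - b_1(k)) \ge E - \mathrm{ord}_p \prod_{i \le k} (i+1)!$
  whenever $p - 1 \nmid k$. The hypothesis on $\mathrm{ord}_p(N-1)$ is what makes this
  perturbation vanish modulo $p^{\nu+1}$ after multiplying by $k!$ and dividing by $k$.\<close>

section \<open>Rationals with bounded-below $p$-adic valuation\<close>

definition pval_ge :: "nat \<Rightarrow> int \<Rightarrow> rat \<Rightarrow> bool" where
  "pval_ge p e x \<longleftrightarrow>
     (\<exists>a b. b \<noteq> 0 \<and> \<not> int p dvd b \<and> x = of_int a / of_int b * power_int (of_nat p) e)"

locale fixed_prime =
  fixes p :: nat
  assumes prime: "prime p"
begin

lemma pval_ge_0: "pval_ge p e 0"
  unfolding pval_ge_def using prime by (intro exI[of _ 0] exI[of _ 1]) (auto simp: prime_nat_iff)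

lemma pval_ge_mono:
  assumes "pval_ge p e x" "e' \<le> e"
  shows "pval_ge p e' x"
proof -
  from assms(1) obtain a b
    where ab: "b \<noteq> 0" "\<not> int p dvd b" "x = of_int a / of_int b * power_int (of_nat p) e"
    unfolding pval_ge_def by blast
  have "(of_nat p :: rat) \<noteq> 0" using prime by (simp add: prime_gt_0_nat)
  then have "power_int (of_nat p :: rat) e = power_int (of_nat p) (e - e') * power_int (of_nat p) e'"
    by (simp add: power_int_add[symmetric])
  also have "power_int (of_nat p :: rat) (e - e') = of_int (int p ^ nat (e - e'))"
    using assms(2) by (simp add: power_int_def)
  finally have "x = of_int (a * int p ^ nat (e - e')) / of_int b * power_int (of_nat p) e'"
    using ab(3) by simp
  then show ?thesis unfolding pval_ge_def using ab(1,2) by blast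
qed

lemma pval_ge_add:
  assumes "pval_ge p e x" "pval_ge p e y"
  shows "pval_ge p e (x + y)"
proof -
  from assms(1) obtain a b
    where ab: "b \<noteq> 0" "\<not> int p dvd b" "x = of_int a / of_int b * power_int (of_nat p) e"
    unfolding pval_ge_def by blast
  from assms(2) obtain c d
    where cd: "d \<noteq> 0" "\<not> int p dvd d" "y = of_int c / of_int d * power_int (of_nat p) e"
    unfolding pval_ge_def by blast
  have "x + y = of_int (a * d + c * b) / of_int (b * d) * power_int (of_nat p) e"
    using ab cd by (simp add: field_simps)
  moreover have "\<not> int p dvd b * d"
    using ab(2) cd(2) prime by (simp add: prime_dvd_mult_iff)
  ultimately show ?thesis unfolding pval_ge_def using ab(1) cd(1) by (metis mult_eq_0_iff)
qed

lemma pval_ge_uminus: "pval_ge p e x \<Longrightarrow> pval_ge p e (- x)"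
  unfolding pval_ge_def by (metis minus_divide_left minus_mult_left of_int_minus)

lemma pval_ge_diff: "pval_ge p e x \<Longrightarrow> pval_ge p e y \<Longrightarrow> pval_ge p e (x - y)"
  using pval_ge_add[of e x "- y"] pval_ge_uminus[of e y] by simp

lemma pval_ge_sum: "(\<And>i. i \<in> A \<Longrightarrow> pval_ge p e (f i)) \<Longrightarrow> pval_ge p e (\<Sum>i\<in>A. f i)"
  by (induction A rule: infinite_finite_induct) (simp_all add: pval_ge_0 pval_ge_add)

lemma pval_ge_mult:
  assumes "pval_ge p e x" "pval_ge p f y"
  shows "pval_ge p (e + f) (x * y)"
proof -
  from assms(1) obtain a b
    where ab: "b \<noteq> 0" "\<not> int p dvd b" "x = of_int a / of_int b * power_int (of_nat p) e"
    unfolding pval_ge_def by blast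
  from assms(2) obtain c d
    where cd: "d \<noteq> 0" "\<not> int p dvd d" "y = of_int c / of_int d * power_int (of_nat p) f"
    unfolding pval_ge_def by blast
  have "(of_nat p :: rat) \<noteq> 0" using prime by (simp add: prime_gt_0_nat)
  then have "x * y = of_int (a * c) / of_int (b * d) * power_int (of_nat p) (e + f)"
    using ab cd by (simp add: power_int_add field_simps)
  moreover have "\<not> int p dvd b * d"
    using ab(2) cd(2) prime by (simp add: prime_dvd_mult_iff)
  ultimately show ?thesis unfolding pval_ge_def using ab(1) cd(1) by (metis mult_eq_0_iff)
qed

lemma pval_ge_of_int: "pval_ge p 0 (of_int z)"
  unfolding pval_ge_def using prime by (intro exI[of _ z] exI[of _ 1]) (auto simp: prime_nat_iff)

lemma pval_ge_of_nat: "pval_ge p 0 (of_nat z)"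
  using pval_ge_of_int[of "int z"] by simp

lemma pval_ge_power: "pval_ge p e x \<Longrightarrow> pval_ge p (e * int k) (x ^ k)"
proof (induction k)
  case 0
  then show ?case using pval_ge_of_nat[of 1] by simp
next
  case (Suc k)
  then have "pval_ge p (e + e * int k) (x * x ^ k)" by (intro pval_ge_mult)
  then show ?case by (simp add: algebra_simps)
qed

lemma pval_ge_of_int_dvd:
  assumes "int p ^ k dvd z"
  shows "pval_ge p (int k) (of_int z)"
proof -
  from assms obtain w where "z = int p ^ k * w" by (auto elim: dvdE)
  then have "(of_int z :: rat) = of_int w / of_int 1 * power_int (of_nat p) (int k)" by simp
  moreover have "\<not> int p dvd 1" using prime by (auto simp: prime_nat_iff)
  ultimately show ?thesis unfolding pval_ge_def by (metis one_neq_zero)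
qed

lemma pval_ge_prime_power: "pval_ge p (int k) (of_nat p ^ k)"
  using pval_ge_of_int_dvd[of k "int p ^ k"] by simp

lemma pval_ge_mult_prime_power: "pval_ge p e x \<Longrightarrow> pval_ge p (e + int k) (x * of_nat p ^ k)"
  using pval_ge_mult pval_ge_prime_power by blast

lemma pval_ge_divide_nat:
  assumes "pval_ge p e x" "z > 0"
  shows "pval_ge p (e - int (multiplicity p z)) (x / of_nat z)"
proof -
  from assms(1) obtain a b
    where ab: "b \<noteq> 0" "\<not> int p dvd b" "x = of_int a / of_int b * power_int (of_nat p) e"
    unfolding pval_ge_def by blast
  define r where "r = multiplicity p z"
  obtain w where w: "z = p ^ r * w" "\<not> p dvd w"
    using multiplicity_decompose'[of z p] assms(2) prime unfolding r_def
    by (metis not_prime_unit gr_implies_not0)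
  have w0: "w \<noteq> 0" using w assms(2) by (metis mult_0_right less_irrefl)
  have p0: "(of_nat p :: rat) \<noteq> 0" using prime by (simp add: prime_gt_0_nat)
  have "power_int (of_nat p :: rat) e = power_int (of_nat p) (e - int r) * of_nat p ^ r"
    using p0 by (simp flip: power_int_add power_int_of_nat)
  then have "x / of_nat z = of_int a / of_int (b * int w) * power_int (of_nat p) (e - int r)"
    using ab(3) w(1) w0 p0 by (simp add: field_simps)
  moreover have "\<not> int p dvd b * int w"
    using ab(2) w(2) prime by (simp add: prime_dvd_mult_iff prime_nat_int_transfer)
  ultimately show ?thesis
    unfolding pval_ge_def r_def using ab(1) w0 by (metis mult_eq_0_iff of_nat_eq_0_iff)
qed

lemma pval_ge_cancel_unit:
  assumes "pval_ge p e (x * of_int u)" "\<not> int p dvd u"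
  shows "pval_ge p e x"
proof -
  from assms(1) obtain a b
    where ab: "b \<noteq> 0" "\<not> int p dvd b" "x * of_int u = of_int a / of_int b * power_int (of_nat p) e"
    unfolding pval_ge_def by blast
  have u0: "u \<noteq> 0" using assms(2) by auto
  have "x = (x * of_int u) / of_int u" using u0 by simp
  also have "\<dots> = of_int a / of_int (b * u) * power_int (of_nat p) e"
    using ab(3) by simp
  finally have "x = of_int a / of_int (b * u) * power_int (of_nat p) e" .
  moreover have "\<not> int p dvd b * u"
    using ab(2) assms(2) prime by (simp add: prime_dvd_mult_iff prime_nat_int_transfer)
  ultimately show ?thesis unfolding pval_ge_def using ab(1) u0 by (metis mult_eq_0_iff)
qed

lemma qcong_if_pval_ge:
  assumes "pval_ge p (int s) (x - y)"
  shows "qcong p s x y"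
proof (cases "x = y")
  case False
  from assms obtain a b
    where ab: "b \<noteq> 0" "\<not> int p dvd b" "x - y = of_int a / of_int b * of_nat p ^ s"
    unfolding pval_ge_def by auto
  obtain c d where cd: "quotient_of (x - y) = (c, d)" by (cases "quotient_of (x - y)")
  have d0: "d > 0" using cd quotient_of_denom_pos by blast
  have xy: "x - y = of_int c / of_int d" using cd quotient_of_div by blast
  have cop: "coprime c d" using cd quotient_of_coprime by blast
  have c0: "c \<noteq> 0" using False xy by auto
  have "(of_int c :: rat) * of_int b = of_int a * of_nat p ^ s * of_int d"
    using xy ab(1,3) d0 by (simp add: field_simps)
  then have eq: "c * b = a * int p ^ s * d"
    by (metis (mono_tags) of_int_eq_iff of_int_mult of_int_of_nat_eq of_int_power)
  have pp: "prime (int p)" using prime by (simp add: prime_nat_int_transfer)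
  have "coprime (int p ^ s) b"
    using ab(2) pp by (simp add: prime_imp_coprime coprime_power_left_iff)
  moreover have "int p ^ s dvd c * b" using eq by simp
  ultimately have "int p ^ s dvd c" using coprime_dvd_mult_left_iff by blast
  then have "multiplicity (int p) c \<ge> s"
    using c0 pp by (intro multiplicity_geI) (auto simp: not_prime_unit)
  moreover have "\<not> int p dvd d"
  proof
    assume "int p dvd d"
    then have "int p dvd c" using eq ab(2) pp by (metis dvd_mult prime_dvd_mult_iff)
    with \<open>int p dvd d\<close> cop pp show False by (metis coprime_common_divisor not_prime_unit)
  qed
  then have "multiplicity (int p) d = 0" by (rule not_dvd_imp_multiplicity_0)
  ultimately show ?thesis unfolding qcong_def qord_def using cd by simp
qed (simp add: qcong_def)

end

section \<open>The coefficients $B_{N,n}/n!$\<close>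

definition exp_tail_coeff :: "nat \<Rightarrow> nat \<Rightarrow> rat" where
  "exp_tail_coeff N j = fact N / fact (N + j)"

definition exp_tail :: "nat \<Rightarrow> rat fps" where
  "exp_tail N = Abs_fps (exp_tail_coeff N)"

definition hyp_bern_coeff :: "nat \<Rightarrow> nat \<Rightarrow> rat" where
  "hyp_bern_coeff N n = inverse (exp_tail N) $ n"

text \<open>The classical Bernoulli numbers, with $B_1 = -1/2$.\<close>

definition bernoulli :: "nat \<Rightarrow> rat" where
  "bernoulli k = fact k * hyp_bern_coeff 1 k"

lemma exp_tail_coeff_0 [simp]: "exp_tail_coeff N 0 = 1"
  by (simp add: exp_tail_coeff_def)

lemma exp_tail_nth_0 [simp]: "exp_tail N $ 0 = 1"
  by (simp add: exp_tail_def)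

lemma fps_exp_minus_partial_sum:
  "fps_exp 1 - (\<Sum>k<N. fps_const (1 / fact k) * fps_X ^ k)
     = fps_const (1 / fact N) * fps_X ^ N * exp_tail N"
proof (rule fps_ext)
  fix n
  have "(fps_exp 1 - (\<Sum>k<N. fps_const (1 / fact k) * fps_X ^ k)) $ n
          = (if n < N then 0 else (1::rat) / fact n)"
    by (simp add: fps_sum_nth if_distrib[where f="\<lambda>x. _ * x"] of_nat_fact cong: if_cong)
  moreover have "(fps_const (1 / fact N) * fps_X ^ N * exp_tail N) $ n
          = (if n < N then 0 else 1 / fact n)"
    by (simp add: mult.assoc fps_X_power_mult_nth exp_tail_def exp_tail_coeff_def)
  ultimately show "(fps_exp 1 - (\<Sum>k<N. fps_const (1 / fact k) * fps_X ^ k)) $ n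
          = (fps_const (1 / fact N) * fps_X ^ N * exp_tail N) $ n"
    by simp
qed

lemma hyp_bernoulli_eq: "hyp_bernoulli N n = fact n * hyp_bern_coeff N n"
proof -
  define L where "L = (fps_const (1 / fact N) * fps_X ^ N :: rat fps)"
  have "L \<noteq> 0"
    unfolding L_def by (metis fps_X_power_nth fps_mult_left_const_nth divide_eq_0_iff
        fact_nonzero mult_eq_0_iff of_nat_eq_0_iff one_neq_zero fps_zero_nth)
  then have "L / (L * exp_tail N) = inverse (exp_tail N)"
    using fps_divide_cancel[of L 1 "exp_tail N"] by (simp add: mult.commute fps_divide_unit)
  then show ?thesis
    unfolding hyp_bernoulli_def fps_exp_minus_partial_sum hyp_bern_coeff_def L_def by simp
qed

lemma hyp_bern_coeff_0 [simp]: "hyp_bern_coeff N 0 = 1"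
  by (simp add: hyp_bern_coeff_def)

lemma hyp_bern_coeff_rec:
  assumes "n > 0"
  shows "hyp_bern_coeff N n = - (\<Sum>i=1..n. exp_tail_coeff N i * hyp_bern_coeff N (n - i))"
proof -
  have "(exp_tail N * inverse (exp_tail N)) $ n = 0"
    using assms by (simp add: inverse_mult_eq_1')
  then have "(\<Sum>i=0..n. exp_tail_coeff N i * hyp_bern_coeff N (n - i)) = 0"
    by (simp add: fps_mult_nth exp_tail_def hyp_bern_coeff_def)
  then show ?thesis by (simp add: sum.atLeast_Suc_atMost eq_neg_iff_add_eq_0)
qed

lemma sum_powers_hyp_bern_coeff:
  "(\<Sum>a<M. (of_nat a :: rat) ^ k)
     = fact k * (\<Sum>i\<le>k. hyp_bern_coeff 1 i * of_nat M ^ (k + 1 - i) / fact (k + 1 - i))"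
proof -
  define E where "E = fps_exp (1::rat)"
  define S where "S = (\<Sum>a<M. E ^ a)"
  have "fps_X * exp_tail 1 = E - 1"
    by (rule fps_ext) (simp add: E_def exp_tail_def exp_tail_coeff_def fps_X_mult_nth)
  moreover have "S * (E - 1) = E ^ M - 1"
    unfolding S_def by (induction M) (simp_all add: algebra_simps)
  ultimately have "fps_X * S = inverse (exp_tail 1) * (E ^ M - 1)"
    by (metis (no_types, lifting) exp_tail_nth_0 inverse_mult_eq_1 mult.assoc mult.commute
        mult.left_neutral one_neq_zero)
  then have "(fps_X * S) $ Suc k = (inverse (exp_tail 1) * (E ^ M - 1)) $ Suc k" by simp
  moreover have "(fps_X * S) $ Suc k = (\<Sum>a<M. (of_nat a :: rat) ^ k) / fact k"
    unfolding S_def E_def by (simp add: fps_sum_nth fps_exp_power_mult sum_divide_distrib)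
  moreover have "(inverse (exp_tail 1) * (E ^ M - 1)) $ Suc k
      = (\<Sum>i\<le>k. hyp_bern_coeff 1 i * of_nat M ^ (k + 1 - i) / fact (k + 1 - i))"
    by (simp add: fps_mult_nth atLeast0AtMost sum.atMost_Suc E_def fps_exp_power_mult
        hyp_bern_coeff_def Suc_diff_le)
  ultimately show ?thesis by (simp add: field_simps)
qed

lemma faulhaber:
  "(\<Sum>a<M. (of_nat a :: rat) ^ k)
     = (\<Sum>i\<le>k. of_nat (k choose i) * bernoulli i * of_nat M ^ (k + 1 - i) / of_nat (k + 1 - i))"
  unfolding sum_powers_hyp_bern_coeff sum_distrib_left
proof (rule sum.cong)
  fix i assume "i \<in> {..k}"
  then have "(fact (k + 1 - i) :: rat) = of_nat (k + 1 - i) * fact (k - i)"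
    and "(fact k :: rat) = fact i * fact (k - i) * of_nat (k choose i)"
    by (simp_all add: Suc_diff_le binomial_fact)
  then show "fact k * (hyp_bern_coeff 1 i * of_nat M ^ (k + 1 - i) / fact (k + 1 - i))
      = of_nat (k choose i) * bernoulli i * of_nat M ^ (k + 1 - i) / of_nat (k + 1 - i)"
    by (simp add: bernoulli_def)
qed simp

lemma faulhaber_split:
  "(\<Sum>a<M. (of_nat a :: rat) ^ k) = bernoulli k * of_nat M
     + (\<Sum>i<k. of_nat (k choose i) * bernoulli i * of_nat M ^ (k + 1 - i) / of_nat (k + 1 - i))"
  unfolding faulhaber by (simp add: lessThan_Suc_atMost[symmetric])

section \<open>Kummer's congruence for the Bernoulli numbers\<close>

definition prime_to_residues :: "nat \<Rightarrow> nat \<Rightarrow> nat set" where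
  "prime_to_residues p s = {a. a < p ^ s \<and> \<not> p dvd a}"

definition voronoi_sum :: "nat \<Rightarrow> nat \<Rightarrow> nat \<Rightarrow> nat \<Rightarrow> rat" where
  "voronoi_sum p c s k =
     (\<Sum>a\<in>prime_to_residues p s. of_nat (c * a mod p ^ s) ^ (k - 1) * of_nat (c * a div p ^ s))"

definition kummer_term :: "nat \<Rightarrow> nat \<Rightarrow> rat" where
  "kummer_term p k = (1 - of_nat p ^ (k - 1)) * bernoulli k / of_nat k"

lemma finite_prime_to_residues [simp]: "finite (prime_to_residues p s)"
  unfolding prime_to_residues_def by auto

lemma power_add_minus_power:
  "(r + x) ^ Suc n - r ^ Suc n
     = of_nat (Suc n) * x *
       (\<Sum>j\<le>n. of_nat (n choose j) * x ^ j * r ^ (n - j) / of_nat (Suc j) :: 'a :: field_char_0)"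
proof -
  have "(r + x) ^ Suc n = (\<Sum>i\<le>Suc n. of_nat (Suc n choose i) * x ^ i * r ^ (Suc n - i))"
    using binomial_ring[of x r "Suc n"] by (simp add: add.commute)
  also have "\<dots> = r ^ Suc n + (\<Sum>j<Suc n. of_nat (Suc n choose Suc j) * x ^ Suc j * r ^ (Suc n - Suc j))"
    by (subst sum.atMost_shift) simp
  also have "(\<Sum>j<Suc n. of_nat (Suc n choose Suc j) * x ^ Suc j * r ^ (Suc n - Suc j))
      = (\<Sum>j\<le>n. of_nat (Suc n) * x * (of_nat (n choose j) * x ^ j * r ^ (n - j) / of_nat (Suc j)))"
    unfolding lessThan_Suc_atMost
  proof (rule sum.cong)
    fix j
    have "of_nat (Suc j) * of_nat (Suc n choose Suc j) = (of_nat (Suc n) * of_nat (n choose j) :: 'a)"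
      using binomial_absorption[of j "Suc n"] by (metis diff_Suc_1 of_nat_mult)
    then have "of_nat (Suc n choose Suc j) = (of_nat (Suc n) * of_nat (n choose j) / of_nat (Suc j) :: 'a)"
      by (simp add: field_simps del: of_nat_Suc binomial_Suc_Suc)
    then show "of_nat (Suc n choose Suc j) * x ^ Suc j * r ^ (Suc n - Suc j)
        = of_nat (Suc n) * x * (of_nat (n choose j) * x ^ j * r ^ (n - j) / of_nat (Suc j))"
      by (simp del: of_nat_Suc binomial_Suc_Suc)
  qed simp
  finally show ?thesis by (simp add: sum_distrib_left)
qed

context fixed_prime
begin

lemma multiplicity_less_self: "d > 0 \<Longrightarrow> multiplicity p d < d"
proof -
  assume "d > 0"
  then have "p ^ multiplicity p d \<le> d" by (intro dvd_imp_le multiplicity_dvd)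
  moreover have "multiplicity p d < 2 ^ multiplicity p d" by (rule less_exp)
  moreover have "(2::nat) ^ multiplicity p d \<le> p ^ multiplicity p d"
    using prime_ge_2_nat[OF prime] by (rule power_mono) simp
  ultimately show ?thesis by linarith
qed

lemma faulhaber_term_pval_ge:
  assumes "pval_ge p (-1) (bernoulli i)" "d > 0"
  shows "pval_ge p (int r - 1 - int (multiplicity p d))
           (of_nat c * bernoulli i * of_nat p ^ r / of_nat d)"
proof -
  have "pval_ge p (0 + -1 + int r) (of_nat c * bernoulli i * of_nat p ^ r)"
    by (intro pval_ge_mult_prime_power pval_ge_mult pval_ge_of_nat assms(1))
  from pval_ge_divide_nat[OF this assms(2)] show ?thesis by simp
qed

text \<open>A weak form of von Staudt--Clausen.\<close>

lemma bernoulli_pval_ge: "pval_ge p (-1) (bernoulli j)"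
proof (induction j rule: less_induct)
  case (less j)
  have "pval_ge p 0 (of_nat (j choose i) * bernoulli i * of_nat p ^ (j + 1 - i) / of_nat (j + 1 - i))"
    if "i < j" for i
  proof (rule pval_ge_mono[OF faulhaber_term_pval_ge[OF less.IH[OF that]]])
    show "0 \<le> int (j + 1 - i) - 1 - int (multiplicity p (j + 1 - i))"
      using multiplicity_less_self[of "j + 1 - i"] that by simp
  qed (use that in simp)
  moreover have "pval_ge p 0 ((\<Sum>a<p. (of_nat a :: rat) ^ j))"
    using pval_ge_power[OF pval_ge_of_nat] by (intro pval_ge_sum) simp
  ultimately have "pval_ge p 0 (bernoulli j * of_nat p)"
    using faulhaber_split[where M = p and k = j] pval_ge_diff pval_ge_sum
    by (metis (no_types, lifting) add_diff_cancel_right' lessThan_iff)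
  from pval_ge_divide_nat[OF this, of p] prime show ?case
    by (simp add: prime_gt_0_nat multiplicity_prime)
qed

lemma sum_powers_prime_power_pval_ge:
  assumes "t \<ge> 1"
  shows "pval_ge p (int t - 2) ((\<Sum>a<p ^ t. (of_nat a :: rat) ^ k) / of_nat p ^ t - bernoulli k)"
proof -
  define P where "P = (of_nat p :: rat)"
  have P0: "P \<noteq> 0" unfolding P_def using prime by (simp add: prime_gt_0_nat)
  have "(\<Sum>a<p ^ t. (of_nat a :: rat) ^ k) / P ^ t - bernoulli k
      = (\<Sum>i<k. of_nat (k choose i) * bernoulli i * P ^ (t * (k + 1 - i)) / of_nat (k + 1 - i) / P ^ t)"
    using faulhaber_split[where M = "p ^ t" and k = k] P0
    by (simp add: P_def power_mult add_divide_distrib sum_divide_distrib)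
  also have "\<dots> = (\<Sum>i<k. of_nat (k choose i) * bernoulli i * P ^ (t * (k - i)) / of_nat (k + 1 - i))"
  proof (rule sum.cong)
    fix i assume "i \<in> {..<k}"
    then have "P ^ (t * (k + 1 - i)) = P ^ (t * (k - i)) * P ^ t"
      by (simp add: Suc_diff_le power_add[symmetric] algebra_simps)
    then show "of_nat (k choose i) * bernoulli i * P ^ (t * (k + 1 - i)) / of_nat (k + 1 - i) / P ^ t
        = of_nat (k choose i) * bernoulli i * P ^ (t * (k - i)) / of_nat (k + 1 - i)"
      using P0 by simp
  qed simp
  finally have eq: "(\<Sum>a<p ^ t. (of_nat a :: rat) ^ k) / P ^ t - bernoulli k
      = (\<Sum>i<k. of_nat (k choose i) * bernoulli i * P ^ (t * (k - i)) / of_nat (k + 1 - i))" .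
  have "pval_ge p (int t - 2)
          (of_nat (k choose i) * bernoulli i * P ^ (t * (k - i)) / of_nat (k + 1 - i))"
    if "i < k" for i
  proof (unfold P_def, rule pval_ge_mono[OF faulhaber_term_pval_ge[OF bernoulli_pval_ge]])
    define d where "d = k + 1 - i"
    have "multiplicity p d < d" using that by (intro multiplicity_less_self) (simp add: d_def)
    moreover have "int (t * (k - i)) = int t * int d - int t" using that
      by (simp add: d_def of_nat_diff algebra_simps)
    moreover have "(int t - 1) * (int d - 2) \<ge> 0" using assms that by (simp add: d_def)
    ultimately show "int t - 2 \<le> int (t * (k - i)) - 1 - int (multiplicity p (k + 1 - i))"
      unfolding d_def[symmetric] by (simp add: algebra_simps)
  qed (use that in simp)
  then show ?thesis unfolding P_def[symmetric] eq by (intro pval_ge_sum) simp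
qed

lemma sum_prime_to_residues:
  assumes "s \<ge> 1"
  shows "(\<Sum>a\<in>prime_to_residues p s. (of_nat a :: rat) ^ k)
           = (\<Sum>a<p ^ s. (of_nat a :: rat) ^ k) - of_nat p ^ k * (\<Sum>a<p ^ (s - 1). (of_nat a :: rat) ^ k)"
proof -
  have p0: "p > 0" using prime prime_gt_0_nat by auto
  have ps: "p ^ s = p * p ^ (s - 1)" using assms by (simp flip: power_Suc)
  have U: "{..<p ^ s} = prime_to_residues p s \<union> (\<lambda>b. p * b) ` {..<p ^ (s - 1)}"
    unfolding prime_to_residues_def using ps p0 by (auto elim!: dvdE)
  have D: "prime_to_residues p s \<inter> (\<lambda>b. p * b) ` {..<p ^ (s - 1)} = {}"
    unfolding prime_to_residues_def by auto
  have inj: "inj_on (\<lambda>b. p * b) {..<p ^ (s - 1)}" using p0 by (auto simp: inj_on_def)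
  have "(\<Sum>a<p ^ s. (of_nat a :: rat) ^ k) = (\<Sum>a\<in>prime_to_residues p s. (of_nat a :: rat) ^ k)
          + (\<Sum>a\<in>(\<lambda>b. p * b) ` {..<p ^ (s - 1)}. (of_nat a :: rat) ^ k)"
    unfolding U by (rule sum.union_disjoint) (use D in auto)
  also have "(\<Sum>a\<in>(\<lambda>b. p * b) ` {..<p ^ (s - 1)}. (of_nat a :: rat) ^ k)
      = of_nat p ^ k * (\<Sum>a<p ^ (s - 1). (of_nat a :: rat) ^ k)"
    by (subst sum.reindex[OF inj]) (simp add: sum_distrib_left power_mult_distrib)
  finally show ?thesis by simp
qed

lemma sum_prime_to_residues_pval_ge:
  assumes "s \<ge> 2" "k \<ge> 1"
  shows "pval_ge p (int s - 3)
           ((\<Sum>a\<in>prime_to_residues p s. (of_nat a :: rat) ^ k) / of_nat p ^ s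
              - (1 - of_nat p ^ (k - 1)) * bernoulli k)"
proof -
  define P where "P = (of_nat p :: rat)"
  have P0: "P \<noteq> 0" unfolding P_def using prime by (simp add: prime_gt_0_nat)
  define D1 where "D1 = (\<Sum>a<p ^ s. (of_nat a :: rat) ^ k) / P ^ s - bernoulli k"
  define D2 where "D2 = (\<Sum>a<p ^ (s - 1). (of_nat a :: rat) ^ k) / P ^ (s - 1) - bernoulli k"
  have "pval_ge p (int s - 2) D1"
    unfolding D1_def P_def by (rule sum_powers_prime_power_pval_ge) (use assms in simp)
  moreover have "pval_ge p (int (s - 1) - 2 + int (k - 1)) (D2 * P ^ (k - 1))"
    unfolding D2_def P_def
    by (intro pval_ge_mult_prime_power sum_powers_prime_power_pval_ge) (use assms in simp)
  ultimately have "pval_ge p (int s - 3) (D1 - D2 * P ^ (k - 1))"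
    by (intro pval_ge_diff) (erule pval_ge_mono, use assms in simp)+
  moreover have "P ^ s = P * P ^ (s - 1)" "P ^ k = P * P ^ (k - 1)"
    using assms by (simp_all flip: power_Suc)
  then have "(\<Sum>a\<in>prime_to_residues p s. (of_nat a :: rat) ^ k) / P ^ s
               - (1 - P ^ (k - 1)) * bernoulli k = D1 - D2 * P ^ (k - 1)"
    unfolding sum_prime_to_residues[OF order_trans[OF one_le_numeral assms(1)]] D1_def D2_def
    using P0 by (simp add: P_def field_simps)
  ultimately show ?thesis by (simp add: P_def)
qed

lemma bij_betw_mult_mod_prime_to_residues:
  assumes "\<not> p dvd c"
  shows "bij_betw (\<lambda>a. c * a mod p ^ s) (prime_to_residues p s) (prime_to_residues p s)"
proof -
  have "coprime p c" using assms prime by (simp add: prime_imp_coprime)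
  then have "coprime c (p ^ s)" by (simp add: coprime_commute coprime_power_right_iff)
  then have inj: "inj_on (\<lambda>a. c * a mod p ^ s) (prime_to_residues p s)"
    unfolding prime_to_residues_def
    by (auto intro!: inj_onI cong_less_modulus_unique_nat simp: cong_def[symmetric]
        cong_mult_lcancel_nat)
  moreover have "(\<lambda>a. c * a mod p ^ s) ` prime_to_residues p s \<subseteq> prime_to_residues p s"
  proof
    fix y assume "y \<in> (\<lambda>a. c * a mod p ^ s) ` prime_to_residues p s"
    then obtain a where a: "a < p ^ s" "\<not> p dvd a" and y: "y = c * a mod p ^ s"
      unfolding prime_to_residues_def by auto
    have "s > 0" using a prime by (cases s) (auto simp: prime_nat_iff)
    then have "p dvd y \<longleftrightarrow> p dvd c * a" unfolding y by (simp add: dvd_mod_iff)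
    then have "\<not> p dvd y" using a(2) assms prime by (simp add: prime_dvd_mult_iff)
    moreover have "y < p ^ s" using y prime by (simp add: prime_gt_0_nat)
    ultimately show "y \<in> prime_to_residues p s" unfolding prime_to_residues_def by simp
  qed
  ultimately show ?thesis
    by (simp add: bij_betw_def endo_inj_surj)
qed

lemma voronoi_term_pval_ge:
  assumes "s \<ge> 1"
  shows "pval_ge p (int s - 1)
           (of_nat (n choose Suc j) * (of_nat (p ^ s) * of_nat g) ^ Suc j * of_nat f ^ (n - Suc j)
              / of_nat (Suc (Suc j)) :: rat)"
proof -
  define z where "z = (n choose Suc j) * g ^ Suc j * f ^ (n - Suc j)"
  have "pval_ge p (0 + int (s * Suc j)) (of_nat z * of_nat p ^ (s * Suc j))"
    by (rule pval_ge_mult_prime_power[OF pval_ge_of_nat])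
  then have val: "pval_ge p (0 + int (s * Suc j) - int (multiplicity p (Suc (Suc j))))
      (of_nat z * of_nat p ^ (s * Suc j) / of_nat (Suc (Suc j)))"
    by (rule pval_ge_divide_nat) simp
  have "j * 1 \<le> j * s" using assms by (intro mult_le_mono2)
  then have "int j \<le> int j * int s" by (simp only: mult_1_right of_nat_mult[symmetric] of_nat_le_iff)
  moreover have "multiplicity p (Suc (Suc j)) < Suc (Suc j)" by (rule multiplicity_less_self) simp
  ultimately have bound: "int s - 1 \<le> 0 + int (s * Suc j) - int (multiplicity p (Suc (Suc j)))"
    by (simp add: algebra_simps)
  have "(of_nat (n choose Suc j) * (of_nat (p ^ s) * of_nat g) ^ Suc j
        * of_nat f ^ (n - Suc j) / of_nat (Suc (Suc j)) :: rat)
      = of_nat z * of_nat p ^ (s * Suc j) / of_nat (Suc (Suc j))"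
    unfolding z_def of_nat_mult of_nat_power power_mult_distrib power_mult by (simp add: mult_ac)
  then show ?thesis using pval_ge_mono[OF val bound] by simp
qed

text \<open>Voronoi's identity: multiplying the residues prime to $p$ by $c$ permutes them, and
  expanding $(ca)^k = (ca \bmod p^s + p^s \lfloor ca/p^s \rfloor)^k$ to first order in $p^s$
  relates the power sum to the sum of $(ca \bmod p^s)^{k-1} \lfloor ca/p^s \rfloor$.\<close>

lemma voronoi_congruence:
  assumes "s \<ge> 1" "\<not> p dvd c" "k \<ge> 1"
  shows "pval_ge p (int s - 1)
           ((of_nat c ^ k - 1) * (\<Sum>a\<in>prime_to_residues p s. (of_nat a :: rat) ^ k)
              / (of_nat k * of_nat p ^ s) - voronoi_sum p c s k)"
proof -
  define R where "R = prime_to_residues p s"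
  define M where "M = p ^ s"
  define f where "f a = c * a mod M" for a
  define g where "g a = c * a div M" for a
  obtain n where kn: "k = Suc n" using assms(3) by (cases k) auto
  have M0: "(of_nat M :: rat) \<noteq> 0" using prime by (simp add: M_def prime_gt_0_nat)
  have perm: "(\<Sum>a\<in>R. (of_nat (f a) :: rat) ^ k) = (\<Sum>a\<in>R. (of_nat a :: rat) ^ k)"
    using sum.reindex_bij_betw[OF bij_betw_mult_mod_prime_to_residues[OF assms(2)],
        of "\<lambda>a. (of_nat a :: rat) ^ k" s]
    unfolding R_def f_def M_def by simp
  have ca: "(of_nat c :: rat) * of_nat a = of_nat (f a) + of_nat M * of_nat (g a)" for a
    unfolding f_def g_def by (metis add.commute div_mult_mod_eq mult.commute of_nat_add of_nat_mult)
  define V where "V a = (\<Sum>j\<le>n. of_nat (n choose j) * (of_nat M * of_nat (g a)) ^ j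
                                  * of_nat (f a) ^ (n - j) / of_nat (Suc j) :: rat)" for a
  have "(of_nat c ^ k - 1) * (\<Sum>a\<in>R. (of_nat a :: rat) ^ k)
      = (\<Sum>a\<in>R. (of_nat c * of_nat a) ^ k) - (\<Sum>a\<in>R. (of_nat (f a) :: rat) ^ k)"
    unfolding perm left_diff_distrib sum_distrib_left power_mult_distrib by (simp add: sum_subtractf)
  also have "\<dots> = (\<Sum>a\<in>R. (of_nat (f a) + of_nat M * of_nat (g a)) ^ k - (of_nat (f a) :: rat) ^ k)"
    unfolding ca by (simp add: sum_subtractf)
  also have "\<dots> = of_nat k * of_nat M * (\<Sum>a\<in>R. of_nat (g a) * V a)"
    unfolding kn power_add_minus_power V_def by (simp add: sum_distrib_left mult_ac)
  finally have eq: "(of_nat c ^ k - 1) * (\<Sum>a\<in>R. (of_nat a :: rat) ^ k) / (of_nat k * of_nat M)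
      = (\<Sum>a\<in>R. of_nat (g a) * V a)"
    using M0 assms(3) by simp
  have "pval_ge p (int s - 1) (of_nat (g a) * V a - of_nat (f a) ^ (k - 1) * of_nat (g a))" for a
  proof -
    have "of_nat (g a) * V a - of_nat (f a) ^ (k - 1) * of_nat (g a)
        = of_nat (g a) * (\<Sum>j<n. of_nat (n choose Suc j) * (of_nat M * of_nat (g a)) ^ Suc j
                                  * of_nat (f a) ^ (n - Suc j) / of_nat (Suc (Suc j)))"
      unfolding V_def kn by (simp add: sum.atMost_shift algebra_simps)
    moreover have "pval_ge p (0 + (int s - 1)) \<dots>"
      unfolding M_def
      by (intro pval_ge_mult pval_ge_of_nat pval_ge_sum voronoi_term_pval_ge assms(1))
    ultimately show ?thesis by simp
  qed
  then have "pval_ge p (int s - 1)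
      ((\<Sum>a\<in>R. of_nat (g a) * V a) - (\<Sum>a\<in>R. of_nat (f a) ^ (k - 1) * of_nat (g a)))"
    unfolding sum_subtractf[symmetric] by (intro pval_ge_sum)
  then show ?thesis
    unfolding voronoi_sum_def R_def[symmetric] f_def[symmetric] g_def[symmetric]
      M_def[symmetric] eq[symmetric] by (simp add: M_def)
qed

lemma pval_ge_voronoi_sum: "pval_ge p 0 (voronoi_sum p c s k)"
  unfolding voronoi_sum_def by (intro pval_ge_sum) (metis of_nat_mult of_nat_power pval_ge_of_nat)

lemma kummer_term_voronoi:
  assumes "k \<ge> 1" "\<not> p dvd c" "s \<ge> v + 4 + k"
  shows "pval_ge p (int v + 1) ((of_nat c ^ k - 1) * kummer_term p k - voronoi_sum p c s k)"
proof -
  define P where "P = (of_nat p :: rat)"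
  define T where "T = (\<Sum>a\<in>prime_to_residues p s. (of_nat a :: rat) ^ k)"
  define U where "U = (of_nat c ^ k - 1 :: rat)"
  define D where "D = T / P ^ s - (1 - P ^ (k - 1)) * bernoulli k"
  have "multiplicity p k < k" using assms(1) by (intro multiplicity_less_self) simp
  have "pval_ge p (int s - 3) D"
    unfolding D_def T_def P_def by (rule sum_prime_to_residues_pval_ge) (use assms in auto)
  then have "pval_ge p (0 + (int s - 3 - int (multiplicity p k))) (U * (D / of_nat k))"
    unfolding U_def using pval_ge_of_int[of "int c ^ k - 1"] assms(1)
    by (intro pval_ge_mult pval_ge_divide_nat) simp_all
  then have error: "pval_ge p (int v + 1) (U * (D / of_nat k))"
    by (rule pval_ge_mono) (use assms(3) \<open>multiplicity p k < k\<close> in linarith)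
  have "pval_ge p (int s - 1) (U * T / (of_nat k * P ^ s) - voronoi_sum p c s k)"
    unfolding U_def T_def P_def by (rule voronoi_congruence) (use assms in auto)
  then have "pval_ge p (int v + 1) (U * T / (of_nat k * P ^ s) - voronoi_sum p c s k)"
    by (rule pval_ge_mono) (use assms(3) in linarith)
  moreover have "U * kummer_term p k - voronoi_sum p c s k
      = (U * T / (of_nat k * P ^ s) - voronoi_sum p c s k) - U * (D / of_nat k)"
    unfolding kummer_term_def D_def P_def using assms(1) by (simp add: field_simps)
  ultimately show ?thesis
    unfolding U_def[symmetric] using pval_ge_diff[OF _ error] by presburger
qed

lemma prime_power_dvd_power_minus_1:
  assumes "\<not> p dvd u" "(p - 1) * p ^ v dvd d"
  shows "int p ^ (v + 1) dvd int u ^ d - 1"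
proof -
  have "coprime p u" using assms prime by (simp add: prime_imp_coprime)
  then have "coprime u (p ^ (v + 1))" by (simp add: coprime_commute coprime_power_right_iff)
  then have "[u ^ totient (p ^ (v + 1)) = 1] (mod p ^ (v + 1))" by (rule euler_theorem)
  moreover have "totient (p ^ (v + 1)) = (p - 1) * p ^ v"
    using totient_prime_power[OF prime, of "v + 1"] by simp
  moreover obtain t where "d = (p - 1) * p ^ v * t" using assms(2) by (auto elim: dvdE)
  ultimately have "[(u ^ totient (p ^ (v + 1))) ^ t = 1 ^ t] (mod p ^ (v + 1))"
    and "d = totient (p ^ (v + 1)) * t"
    by (simp_all only: cong_pow)
  then have "[u ^ d = 1] (mod p ^ (v + 1))" by (simp only: power_mult power_one)
  then have "[int (u ^ d) = int 1] (mod int (p ^ (v + 1)))" by (simp only: cong_int_iff)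
  then show ?thesis by (simp add: cong_iff_dvd_diff)
qed

lemma primitive_root_mod_prime:
  obtains c where "\<not> p dvd c" "\<And>k. \<not> (p - 1) dvd k \<Longrightarrow> \<not> int p dvd int c ^ k - 1"
proof -
  obtain c where "residue_primroot p c"
    using prime_primitive_root_exists[OF prime_gt_1_nat[OF prime] prime] by blast
  then have ord: "ord p c = p - 1" and cop: "coprime p c"
    unfolding residue_primroot_def using totient_prime[OF prime] by auto
  have "\<not> int p dvd int c ^ k - 1" if "\<not> (p - 1) dvd k" for k
  proof
    assume "int p dvd int c ^ k - 1"
    then have "[int (c ^ k) = int 1] (mod int p)" by (simp add: cong_iff_dvd_diff)
    then have "[c ^ k = 1] (mod p)" by (simp only: cong_int_iff)
    then show False using that ord ord_divides by metis
  qed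
  moreover have "\<not> p dvd c" using cop prime by (metis coprime_absorb_left not_prime_unit)
  ultimately show ?thesis using that by blast
qed

lemma kummer_term_pval_ge_0:
  assumes "k \<ge> 1" "\<not> (p - 1) dvd k"
  shows "pval_ge p 0 (kummer_term p k)"
proof -
  obtain c where c: "\<not> p dvd c" "\<not> int p dvd int c ^ k - 1"
    using primitive_root_mod_prime assms(2) by metis
  have "pval_ge p (int 0 + 1) ((of_nat c ^ k - 1) * kummer_term p k - voronoi_sum p c (k + 4) k)"
    by (rule kummer_term_voronoi) (use assms c in auto)
  then have "pval_ge p 0 ((of_nat c ^ k - 1) * kummer_term p k - voronoi_sum p c (k + 4) k)"
    by (rule pval_ge_mono) simp
  from pval_ge_add[OF this pval_ge_voronoi_sum[of c "k + 4" k]]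
  have "pval_ge p 0 (kummer_term p k * of_int (int c ^ k - 1))" by (simp add: mult.commute)
  then show ?thesis using c(2) by (rule pval_ge_cancel_unit)
qed

lemma voronoi_sum_congruence:
  assumes "\<not> p dvd c" "1 \<le> n" "n \<le> m" "(p - 1) * p ^ v dvd m - n"
  shows "pval_ge p (int v + 1) (voronoi_sum p c s m - voronoi_sum p c s n)"
proof -
  define f where "f a = c * a mod p ^ s" for a
  define g where "g a = c * a div p ^ s" for a
  have "voronoi_sum p c s m - voronoi_sum p c s n
      = (\<Sum>a\<in>prime_to_residues p s.
           of_nat (f a ^ (n - 1) * g a) * of_int (int (f a) ^ (m - n) - 1))"
    unfolding voronoi_sum_def sum_subtractf[symmetric] f_def[symmetric] g_def[symmetric]
  proof (rule sum.cong)
    fix a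
    have "m - 1 = (n - 1) + (m - n)" using assms(2,3) by simp
    then show "of_nat (f a) ^ (m - 1) * of_nat (g a) - of_nat (f a) ^ (n - 1) * (of_nat (g a) :: rat)
        = of_nat (f a ^ (n - 1) * g a) * of_int (int (f a) ^ (m - n) - 1)"
      by (simp add: power_add algebra_simps)
  qed simp
  moreover have "pval_ge p (0 + int (v + 1))
      (of_nat (f a ^ (n - 1) * g a) * of_int (int (f a) ^ (m - n) - 1))"
    if "a \<in> prime_to_residues p s" for a
  proof -
    have "f a \<in> prime_to_residues p s"
      using that bij_betw_mult_mod_prime_to_residues[OF assms(1), of s]
      unfolding f_def bij_betw_def by blast
    then have "\<not> p dvd f a" unfolding prime_to_residues_def by simp
    then show ?thesis
      by (intro pval_ge_mult pval_ge_of_nat pval_ge_of_int_dvd prime_power_dvd_power_minus_1 assms(4))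
  qed
  ultimately show ?thesis by (simp add: pval_ge_sum add.commute)
qed

lemma kummer_congruence:
  assumes "1 \<le> n" "n \<le> m" "(p - 1) * p ^ v dvd m - n" "\<not> (p - 1) dvd m" "\<not> (p - 1) dvd n"
  shows "pval_ge p (int v + 1) (kummer_term p m - kummer_term p n)"
proof -
  obtain c where c: "\<not> p dvd c" "\<not> int p dvd int c ^ m - 1"
    using primitive_root_mod_prime assms(4) by metis
  define s where "s = v + 4 + m"
  define Cm where "Cm = (of_nat c ^ m - 1 :: rat)"
  define Cn where "Cn = (of_nat c ^ n - 1 :: rat)"
  have Ym: "pval_ge p (int v + 1) (Cm * kummer_term p m - voronoi_sum p c s m)"
    unfolding Cm_def s_def by (rule kummer_term_voronoi) (use assms c in auto)
  have Yn: "pval_ge p (int v + 1) (Cn * kummer_term p n - voronoi_sum p c s n)"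
    unfolding Cn_def s_def by (rule kummer_term_voronoi) (use assms c in auto)
  have V: "pval_ge p (int v + 1) (voronoi_sum p c s m - voronoi_sum p c s n)"
    by (rule voronoi_sum_congruence) (use assms c in auto)
  have C: "pval_ge p (int v + 1 + 0) ((Cm - Cn) * kummer_term p n)"
  proof (rule pval_ge_mult[OF _ kummer_term_pval_ge_0[OF assms(1,5)]])
    have "Cm - Cn = of_nat (c ^ n) * of_int (int c ^ (m - n) - 1)"
      unfolding Cm_def Cn_def using assms(2) by (simp add: algebra_simps flip: power_add)
    moreover have "pval_ge p (0 + int (v + 1)) (of_nat (c ^ n) * of_int (int c ^ (m - n) - 1))"
      by (intro pval_ge_mult pval_ge_of_nat pval_ge_of_int_dvd prime_power_dvd_power_minus_1 c(1)
          assms(3))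
    ultimately show "pval_ge p (int v + 1) (Cm - Cn)" by (simp add: add.commute)
  qed
  have "Cm * (kummer_term p m - kummer_term p n)
      = (Cm * kummer_term p m - voronoi_sum p c s m) - (Cn * kummer_term p n - voronoi_sum p c s n)
        + (voronoi_sum p c s m - voronoi_sum p c s n) - (Cm - Cn) * kummer_term p n"
    by (simp add: algebra_simps)
  with pval_ge_diff[OF pval_ge_add[OF pval_ge_diff[OF Ym Yn] V] C[simplified]]
  have "pval_ge p (int v + 1) ((kummer_term p m - kummer_term p n) * of_int (int c ^ m - 1))"
    by (simp add: Cm_def mult.commute)
  then show ?thesis using c(2) by (rule pval_ge_cancel_unit)
qed

end

section \<open>Valuations of factorials\<close>

definition ord_fact :: "nat \<Rightarrow> nat \<Rightarrow> nat" where
  "ord_fact p t = multiplicity p (fact t :: nat)"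

primrec ord_superfact :: "nat \<Rightarrow> nat \<Rightarrow> nat" where
  "ord_superfact p 0 = 0"
| "ord_superfact p (Suc k) = ord_superfact p k + ord_fact p (Suc (Suc k))"

text \<open>The precision lost in passing from $B_{1,k}/k!$ to $B_{N,k}/k!$; the extra unit at
  $k = p - 1$ comes from the denominator $p$ of $B_{p-1}$.\<close>

definition perturb_loss :: "nat \<Rightarrow> nat \<Rightarrow> nat" where
  "perturb_loss p k = ord_superfact p k + (if k = p - 1 then 1 else 0)"

definition bern_coeff_loss :: "nat \<Rightarrow> nat \<Rightarrow> nat" where
  "bern_coeff_loss p j = (if j < p - 1 then 0 else 1 + ord_fact p j)"

lemma power_ge_mult_add_2:
  fixes p r :: nat
  assumes "p \<ge> 3" "r \<ge> 2"
  shows "p ^ r \<ge> p * r + 2"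
  using assms(2)
proof (induction r rule: nat_induct_at_least)
  case base
  have "p * p \<ge> 3 * p" using assms by simp
  then have "p * p \<ge> p * 2 + 2" using assms by linarith
  then show ?case by (simp add: power2_eq_square)
next
  case (Suc r)
  have "p * Suc r + 2 \<le> p * (p * r + 2)"
  proof -
    have "p * (p * r + 2) = p * p * r + 2 * p" by (simp add: algebra_simps)
    moreover have "p * p * r \<ge> 3 * p * r" using assms by simp
    moreover have "3 * p * r \<ge> p * r + p" using Suc(1) by simp
    moreover have "p * Suc r = p * r + p" by simp
    ultimately show ?thesis using assms by linarith
  qed
  also have "\<dots> \<le> p * p ^ r" using Suc(2) by (rule mult_le_mono2)
  finally show ?case by simp
qed

lemma ord_superfact_mono: "j \<le> k \<Longrightarrow> ord_superfact p j \<le> ord_superfact p k"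
  by (induction k) (auto simp: le_Suc_eq)

lemma ord_superfact_last_le:
  assumes "j < k"
  shows "ord_superfact p j + ord_fact p (Suc k) \<le> ord_superfact p k"
proof -
  obtain k' where "k = Suc k'" using assms by (cases k) auto
  then show ?thesis using ord_superfact_mono[of j k' p] assms by simp
qed

lemma ord_superfact_last2_le:
  assumes "j + 1 < k"
  shows "ord_superfact p j + ord_fact p k + ord_fact p (Suc k) \<le> ord_superfact p k"
proof -
  obtain k' where "k = Suc k'" using assms by (cases k) auto
  then show ?thesis using ord_superfact_last_le[of j k' p] assms by simp
qed

lemma ord_superfact_last3_le:
  assumes "j + 2 < k"
  shows "ord_superfact p j + ord_fact p (k - 1) + ord_fact p k + ord_fact p (Suc k)
           \<le> ord_superfact p k"
proof -
  obtain k' where k: "k = Suc k'" using assms by (cases k) auto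
  then show ?thesis using ord_superfact_last2_le[of j k' p] assms by simp
qed

context fixed_prime
begin

lemma ord_fact_Suc: "ord_fact p (Suc t) = ord_fact p t + multiplicity p (Suc t)"
  unfolding ord_fact_def fact_Suc of_nat_id
  using prime_elem_multiplicity_mult_distrib[of p "Suc t" "fact t :: nat"] prime
  by (simp add: add.commute)

lemma ord_fact_eq_0: "t < p \<Longrightarrow> ord_fact p t = 0"
  unfolding ord_fact_def using prime_dvd_fact_iff[OF prime, of t]
  by (simp add: not_dvd_imp_multiplicity_0)

lemma ord_fact_mono: "a \<le> b \<Longrightarrow> ord_fact p a \<le> ord_fact p b"
  unfolding ord_fact_def by (rule dvd_imp_multiplicity_le) (auto simp: fact_dvd)

lemma ord_fact_add_le: "ord_fact p a + ord_fact p b \<le> ord_fact p (a + b)"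
proof -
  have "multiplicity p (fact a * fact b :: nat) \<le> multiplicity p (fact (a + b) :: nat)"
    by (rule dvd_imp_multiplicity_le[OF fact_fact_dvd_fact]) simp
  moreover have "multiplicity p (fact a * fact b :: nat) = ord_fact p a + ord_fact p b"
    unfolding ord_fact_def using prime by (intro prime_elem_multiplicity_mult_distrib) auto
  ultimately show ?thesis unfolding ord_fact_def by simp
qed

lemma ord_fact_prime: "ord_fact p p = 1"
proof -
  obtain q where q: "p = Suc q" using prime prime_gt_0_nat by (cases p) auto
  then have "ord_fact p q = 0" by (intro ord_fact_eq_0) simp
  then show ?thesis using ord_fact_Suc[of q] q prime by (simp add: multiplicity_prime)
qed

lemma ord_fact_ge_1: "t \<ge> p \<Longrightarrow> ord_fact p t \<ge> 1"
  using ord_fact_mono[of p t] ord_fact_prime by simp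

lemma ord_fact_ge_div: "ord_fact p t \<ge> t div p"
proof -
  have "ord_fact p (p * q) \<ge> q" for q
  proof (induction q)
    case (Suc q)
    then show ?case using ord_fact_add_le[of "p * q" p] ord_fact_prime by (simp add: add.commute)
  qed simp
  moreover have "p * (t div p) \<le> t" by simp
  ultimately show ?thesis using ord_fact_mono order_trans by blast
qed

lemma ord_fact_Suc_le:
  assumes "p \<ge> 3" "k \<ge> p"
  shows "ord_fact p (Suc k) \<le> ord_fact p k + ord_fact p (k - 1)"
proof -
  define r where "r = multiplicity p (Suc k)"
  have "r \<le> ord_fact p (k - 1)"
  proof (cases "r \<ge> 2")
    case True
    have "p ^ r \<le> Suc k" unfolding r_def by (intro dvd_imp_le multiplicity_dvd) simp
    with power_ge_mult_add_2[OF assms(1) True] have "p * r \<le> k - 1" by simp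
    then have "r \<le> (k - 1) div p" using prime prime_gt_0_nat
      by (metis div_le_mono nonzero_mult_div_cancel_left not_gr_zero)
    then show ?thesis using ord_fact_ge_div[of "k - 1"] by simp
  next
    case False
    show ?thesis
    proof (cases "r = 0")
      case False
      with \<open>\<not> r \<ge> 2\<close> have "r = 1" by simp
      then have "p dvd Suc k" unfolding r_def
        by (metis multiplicity_dvd power_one_right)
      then obtain q where q: "Suc k = p * q" by (auto elim: dvdE)
      have "q \<ge> 2"
      proof (rule ccontr)
        assume "\<not> q \<ge> 2"
        then have "p * q \<le> p" by (simp add: mult_le_cancel1)
        with q assms(2) show False by linarith
      qed
      then have "p * q \<ge> 2 * p" by simp
      then have "k - 1 \<ge> p" using q assms by linarith
      then show ?thesis using ord_fact_ge_1 \<open>r = 1\<close> by simp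
    qed simp
  qed
  then show ?thesis using ord_fact_Suc[of k] unfolding r_def by simp
qed

lemma ord_superfact_eq_0: "k + 1 < p \<Longrightarrow> ord_superfact p k = 0"
  by (induction k) (auto intro: ord_fact_eq_0)

lemma ord_superfact_p_minus_1: "ord_superfact p (p - 1) = 1"
proof -
  obtain q where q: "p = Suc (Suc q)" using prime_ge_2_nat[OF prime]
    by (metis add_2_eq_Suc le_Suc_ex)
  then have "ord_superfact p q = 0" by (intro ord_superfact_eq_0) simp
  then show ?thesis using q ord_fact_prime by simp
qed

lemma bern_coeff_loss_le:
  assumes "p \<ge> 3"
  shows "bern_coeff_loss p j \<le> ord_superfact p j"
proof (cases "j < p - 1")
  case False
  then have "j \<ge> 2" "Suc j \<ge> p" using assms by auto
  then have "ord_superfact p 0 + ord_fact p j + ord_fact p (Suc j) \<le> ord_superfact p j"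
    by (intro ord_superfact_last2_le) simp
  moreover have "ord_fact p (Suc j) \<ge> 1" using \<open>Suc j \<ge> p\<close> by (rule ord_fact_ge_1)
  ultimately show ?thesis unfolding bern_coeff_loss_def using False by simp
qed (simp add: bern_coeff_loss_def)

lemma perturb_loss_shift:
  assumes "p \<ge> 3" "1 \<le> i" "i < k"
  shows "ord_fact p (Suc i) + perturb_loss p (k - i) \<le> perturb_loss p k"
proof -
  have a: "ord_superfact p (k - i) + ord_fact p (Suc k) \<le> ord_superfact p k"
    by (rule ord_superfact_last_le) (use assms in simp)
  have b: "ord_fact p (Suc i) \<le> ord_fact p (Suc k)" using assms by (intro ord_fact_mono) simp
  show ?thesis
  proof (cases "k - i = p - 1")
    case False
    then show ?thesis using a b unfolding perturb_loss_def by simp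
  next
    case True
    then have "k \<noteq> p - 1" "k \<ge> p" using assms by auto
    show ?thesis
    proof (cases "i = 1")
      case True
      have "ord_fact p (Suc i) = 0" using True assms by (intro ord_fact_eq_0) simp
      moreover have "ord_fact p (Suc k) \<ge> 1" using \<open>k \<ge> p\<close> by (intro ord_fact_ge_1) simp
      ultimately show ?thesis
        using a \<open>k - i = p - 1\<close> \<open>k \<noteq> p - 1\<close> unfolding perturb_loss_def by simp
    next
      case False
      have "ord_superfact p (k - i) + ord_fact p k + ord_fact p (Suc k) \<le> ord_superfact p k"
        by (rule ord_superfact_last2_le) (use assms False in simp)
      moreover have "ord_fact p k \<ge> 1" using \<open>k \<ge> p\<close> by (rule ord_fact_ge_1)
      ultimately show ?thesis
        using b \<open>k - i = p - 1\<close> \<open>k \<noteq> p - 1\<close> unfolding perturb_loss_def by simp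
    qed
  qed
qed

lemma ord_fact_twice_le_perturb_loss:
  assumes "p \<ge> 3" "k \<ge> p - 1"
  shows "2 * ord_fact p (Suc k) \<le> perturb_loss p k"
proof (cases "k = p - 1")
  case True
  then have "ord_fact p (Suc k) = 1" using ord_fact_prime prime_gt_0_nat[OF prime] by simp
  then show ?thesis using True ord_superfact_p_minus_1 unfolding perturb_loss_def by simp
next
  case False
  then have "k \<ge> p" using assms by simp
  have "ord_superfact p 0 + ord_fact p (k - 1) + ord_fact p k + ord_fact p (Suc k)
          \<le> ord_superfact p k"
    by (rule ord_superfact_last3_le) (use \<open>k \<ge> p\<close> assms in simp)
  moreover have "ord_fact p (Suc k) \<le> ord_fact p k + ord_fact p (k - 1)"
    by (rule ord_fact_Suc_le[OF assms(1) \<open>k \<ge> p\<close>])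
  ultimately show ?thesis unfolding perturb_loss_def by simp
qed

lemma perturb_loss_cross:
  assumes "p \<ge> 3" "1 \<le> i" "i \<le> k"
  shows "2 * ord_fact p (Suc i) + bern_coeff_loss p (k - i) \<le> perturb_loss p k"
proof (cases "i + 1 < p")
  case True
  then have "ord_fact p (Suc i) = 0" by (intro ord_fact_eq_0) simp
  moreover have "bern_coeff_loss p (k - i) \<le> ord_superfact p k"
    using bern_coeff_loss_le[OF assms(1), of "k - i"] ord_superfact_mono[of "k - i" k p] by simp
  ultimately show ?thesis unfolding perturb_loss_def by simp
next
  case False
  then have ip: "i \<ge> p - 1" by simp
  consider "k = i" | "i < k" "k - i < p - 1" | "i < k" "k - i \<ge> p - 1"
    using assms by linarith
  then show ?thesis
  proof cases
    case 1
    then show ?thesis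
      using ord_fact_twice_le_perturb_loss[OF assms(1)] ip assms(1)
      unfolding bern_coeff_loss_def by simp
  next
    case 2
    have "ord_superfact p 0 + ord_fact p k + ord_fact p (Suc k) \<le> ord_superfact p k"
      by (rule ord_superfact_last2_le) (use 2 assms in simp)
    moreover have "ord_fact p (Suc i) \<le> ord_fact p k" "ord_fact p (Suc i) \<le> ord_fact p (Suc k)"
      using 2 by (auto intro: ord_fact_mono)
    ultimately show ?thesis using 2 unfolding perturb_loss_def bern_coeff_loss_def by simp
  next
    case 3
    then have kp: "k \<ge> 2 * p - 2" using ip by simp
    have "ord_superfact p 0 + ord_fact p (k - 1) + ord_fact p k + ord_fact p (Suc k)
            \<le> ord_superfact p k"
      by (rule ord_superfact_last3_le) (use kp assms in simp)
    moreover have "ord_fact p (Suc i) + ord_fact p (k - i) \<le> ord_fact p (Suc k)"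
      using ord_fact_add_le[of "Suc i" "k - i"] 3 by simp
    moreover have "ord_fact p (Suc i) \<le> ord_fact p k" using 3 by (intro ord_fact_mono) simp
    moreover have "ord_fact p (k - 1) \<ge> 1" by (rule ord_fact_ge_1) (use kp assms in simp)
    ultimately show ?thesis using 3 unfolding perturb_loss_def bern_coeff_loss_def by simp
  qed
qed

end

section \<open>Comparison of $B_{N,k}$ with $B_{1,k}$\<close>

lemma fact_add_eq_pochhammer: "fact (N + i) = (fact N * pochhammer (Suc N) i :: nat)"
  by (induction i) (simp_all add: pochhammer_Suc algebra_simps)

lemma exp_tail_coeff_eq: "exp_tail_coeff N i = 1 / of_nat (pochhammer (Suc N) i)"
proof -
  have "(fact (N + i) :: rat) = fact N * of_nat (pochhammer (Suc N) i)"
    by (metis fact_add_eq_pochhammer of_nat_fact of_nat_mult)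
  then show ?thesis unfolding exp_tail_coeff_def by simp
qed

lemma pochhammer_2_eq_fact: "pochhammer 2 i = (fact (Suc i) :: nat)"
  using fact_add_eq_pochhammer[of 1 i] by (simp add: numeral_2_eq_2)

lemma pochhammer_cong:
  assumes "[N = 1] (mod q)"
  shows "[pochhammer (Suc N) i = pochhammer 2 i] (mod q)"
proof -
  have "[Suc N + x = 2 + x] (mod q)" for x
    using cong_add[OF assms cong_refl[of "Suc x"]] by simp
  then show ?thesis unfolding pochhammer_prod by (intro cong_prod) simp
qed

lemma hyp_bern_coeff_diff_rec:
  assumes "k > 0"
  shows "hyp_bern_coeff N k - hyp_bern_coeff 1 k
           = - (\<Sum>i=1..k. exp_tail_coeff N i * (hyp_bern_coeff N (k - i) - hyp_bern_coeff 1 (k - i))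
                  + (exp_tail_coeff N i - exp_tail_coeff 1 i) * hyp_bern_coeff 1 (k - i))"
proof -
  have "(\<Sum>i=1..k. exp_tail_coeff N i * (hyp_bern_coeff N (k - i) - hyp_bern_coeff 1 (k - i))
           + (exp_tail_coeff N i - exp_tail_coeff 1 i) * hyp_bern_coeff 1 (k - i))
      = (\<Sum>i=1..k. exp_tail_coeff N i * hyp_bern_coeff N (k - i)
           - exp_tail_coeff 1 i * hyp_bern_coeff 1 (k - i))"
    by (rule sum.cong) (simp_all add: algebra_simps)
  then show ?thesis
    unfolding hyp_bern_coeff_rec[OF assms, of N] hyp_bern_coeff_rec[OF assms, of 1]
    by (simp add: sum_subtractf)
qed

context fixed_prime
begin

lemma multiplicity_eq_if_cong:
  assumes "[a = b] (mod p ^ E)" "b \<noteq> 0" "multiplicity p b < E"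
  shows "multiplicity p a = multiplicity p b"
proof (rule multiplicity_eqI)
  have dvd_iff: "p ^ n dvd a \<longleftrightarrow> p ^ n dvd b" if "n \<le> E" for n
    using cong_dvd_modulus_nat[OF assms(1) le_imp_power_dvd[OF that]] by (rule cong_dvd_iff)
  show "p ^ multiplicity p b dvd a"
    using dvd_iff assms(3) by (simp add: multiplicity_dvd)
  have "\<not> is_unit p" using prime not_prime_unit by blast
  from power_dvd_iff_le_multiplicity[OF assms(2) this, of "Suc (multiplicity p b)"]
  have "\<not> p ^ Suc (multiplicity p b) dvd b" by simp
  then show "\<not> p ^ Suc (multiplicity p b) dvd a"
    using dvd_iff[of "Suc (multiplicity p b)"] assms(3) by simp
qed

lemma exp_tail_coeff_pval_ge:
  assumes "[N = 1] (mod p ^ E)" "ord_fact p (Suc i) < E"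
  shows "pval_ge p (- int (ord_fact p (Suc i))) (exp_tail_coeff N i)"
    and "pval_ge p (int E - 2 * int (ord_fact p (Suc i))) (exp_tail_coeff N i - exp_tail_coeff 1 i)"
proof -
  define QN where "QN = (pochhammer (Suc N) i :: nat)"
  define Q1 where "Q1 = (fact (Suc i) :: nat)"
  have cong: "[QN = Q1] (mod p ^ E)"
    unfolding QN_def Q1_def pochhammer_2_eq_fact[symmetric] using assms(1) by (rule pochhammer_cong)
  have QN0: "QN > 0" and Q10: "Q1 > 0"
    by (simp_all add: QN_def Q1_def pochhammer_pos)
  have mult: "multiplicity p Q1 = ord_fact p (Suc i)" "multiplicity p QN = ord_fact p (Suc i)"
    using multiplicity_eq_if_cong[OF cong] assms(2) by (simp_all add: ord_fact_def Q1_def)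
  have "exp_tail_coeff N i = of_nat 1 / of_nat QN"
    unfolding exp_tail_coeff_eq QN_def by simp
  then show "pval_ge p (- int (ord_fact p (Suc i))) (exp_tail_coeff N i)"
    using pval_ge_divide_nat[OF pval_ge_of_nat[of 1] QN0] mult by simp
  have "[int Q1 = int QN] (mod int (p ^ E))" using cong by (simp only: cong_int_iff cong_sym_eq)
  then have "pval_ge p (int E) (of_int (int Q1 - int QN))"
    by (intro pval_ge_of_int_dvd) (simp add: cong_iff_dvd_diff)
  from pval_ge_divide_nat[OF pval_ge_divide_nat[OF this QN0] Q10]
  have "pval_ge p (int E - 2 * int (ord_fact p (Suc i))) (of_int (int Q1 - int QN) / of_nat QN / of_nat Q1)"
    using mult by simp
  moreover have "exp_tail_coeff 1 i = 1 / of_nat Q1"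
    using exp_tail_coeff_eq[of 1 i] pochhammer_2_eq_fact[of i] by (simp add: Q1_def numeral_2_eq_2)
  then have "exp_tail_coeff N i - exp_tail_coeff 1 i = of_int (int Q1 - int QN) / of_nat QN / of_nat Q1"
    using \<open>exp_tail_coeff N i = of_nat 1 / of_nat QN\<close> QN0 Q10 by (simp add: field_simps)
  ultimately show "pval_ge p (int E - 2 * int (ord_fact p (Suc i))) (exp_tail_coeff N i - exp_tail_coeff 1 i)"
    by simp
qed

lemma hyp_bern_coeff_1_pval_ge_0:
  assumes "j + 1 < p"
  shows "pval_ge p 0 (hyp_bern_coeff 1 j)"
  using assms
proof (induction j rule: less_induct)
  case (less j)
  show ?case
  proof (cases "j = 0")
    case False
    have "pval_ge p 0 (exp_tail_coeff 1 i * hyp_bern_coeff 1 (j - i))" if "i \<in> {1..j}" for i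
    proof -
      have "exp_tail_coeff 1 i = of_nat 1 / of_nat (fact (Suc i))"
        using exp_tail_coeff_eq[of 1 i] pochhammer_2_eq_fact[of i] by (simp add: numeral_2_eq_2)
      moreover have "multiplicity p (fact (Suc i) :: nat) = 0"
        using ord_fact_eq_0[of "Suc i"] less.prems that unfolding ord_fact_def by simp
      ultimately have "pval_ge p 0 (exp_tail_coeff 1 i)"
        using pval_ge_divide_nat[OF pval_ge_of_nat[of 1], of "fact (Suc i)"] by simp
      moreover have "pval_ge p 0 (hyp_bern_coeff 1 (j - i))"
        using less.IH[of "j - i"] less.prems that False by simp
      ultimately show ?thesis using pval_ge_mult by fastforce
    qed
    then show ?thesis
      using False by (subst hyp_bern_coeff_rec) (auto intro!: pval_ge_uminus pval_ge_sum)
  qed (simp add: pval_ge_of_nat[of 1, simplified])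
qed

lemma hyp_bern_coeff_1_pval_ge:
  assumes "p \<ge> 3"
  shows "pval_ge p (- int (bern_coeff_loss p j)) (hyp_bern_coeff 1 j)"
proof (cases "j < p - 1")
  case True
  then show ?thesis using hyp_bern_coeff_1_pval_ge_0[of j] unfolding bern_coeff_loss_def by simp
next
  case False
  have "hyp_bern_coeff 1 j = bernoulli j / of_nat (fact j)" unfolding bernoulli_def by simp
  moreover have "pval_ge p (-1 - int (multiplicity p (fact j :: nat))) (bernoulli j / of_nat (fact j))"
    by (rule pval_ge_divide_nat[OF bernoulli_pval_ge]) simp
  ultimately show ?thesis unfolding bern_coeff_loss_def ord_fact_def using False by simp
qed

lemma hyp_bern_coeff_perturb:
  assumes "p \<ge> 3" "[N = 1] (mod p ^ E)" "ord_superfact p K < E" "k \<le> K"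
  shows "pval_ge p (int E - int (perturb_loss p k)) (hyp_bern_coeff N k - hyp_bern_coeff 1 k)"
  using assms(4)
proof (induction k rule: less_induct)
  case (less k)
  show ?case
  proof (cases "k = 0")
    case False
    have "pval_ge p (int E - int (perturb_loss p k))
        (exp_tail_coeff N i * (hyp_bern_coeff N (k - i) - hyp_bern_coeff 1 (k - i))
          + (exp_tail_coeff N i - exp_tail_coeff 1 i) * hyp_bern_coeff 1 (k - i))"
      if i: "i \<in> {1..k}" for i
    proof (rule pval_ge_add)
      have "ord_superfact p (i - 1) + ord_fact p (Suc i) \<le> ord_superfact p i"
        using ord_superfact_last_le[of "i - 1" i p] i by simp
      then have "ord_fact p (Suc i) < E"
        using ord_superfact_mono[of i K p] i less.prems assms(3) by simp
      note tail = exp_tail_coeff_pval_ge[OF assms(2) this]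
      show "pval_ge p (int E - int (perturb_loss p k))
          (exp_tail_coeff N i * (hyp_bern_coeff N (k - i) - hyp_bern_coeff 1 (k - i)))"
      proof (cases "i = k")
        case False
        have "pval_ge p (int E - int (perturb_loss p (k - i))) (hyp_bern_coeff N (k - i) - hyp_bern_coeff 1 (k - i))"
          using less.IH[of "k - i"] i less.prems by simp
        from pval_ge_mult[OF tail(1) this] show ?thesis
          by (rule pval_ge_mono) (use perturb_loss_shift[OF assms(1), of i k] i False in simp)
      qed (simp add: pval_ge_0)
      from pval_ge_mult[OF tail(2) hyp_bern_coeff_1_pval_ge[OF assms(1)]]
      show "pval_ge p (int E - int (perturb_loss p k))
          ((exp_tail_coeff N i - exp_tail_coeff 1 i) * hyp_bern_coeff 1 (k - i))"
        by (rule pval_ge_mono) (use perturb_loss_cross[OF assms(1), of i k] i in simp)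
    qed
    then show ?thesis
      unfolding hyp_bern_coeff_diff_rec[OF False[unfolded neq0_conv]]
      by (intro pval_ge_uminus pval_ge_sum)
  qed (simp add: pval_ge_0)
qed

end

lemma hyp_bernoulli_minus_kummer_term:
  assumes "k > 0"
  shows "(1 - of_nat p ^ (k - 1)) * hyp_bernoulli N k / of_nat k - kummer_term p k
           = of_int (1 - int p ^ (k - 1)) * (of_nat (fact k)
               * ((hyp_bern_coeff N k - hyp_bern_coeff 1 k) / of_nat k))"
  unfolding hyp_bernoulli_eq kummer_term_def bernoulli_def using assms by (simp add: field_simps)

context fixed_prime
begin

lemma multiplicity_prod_fact: "multiplicity p (\<Prod>k=0..m. fact (1 + k) :: nat) = ord_superfact p m"
proof (induction m)
  case (Suc m)
  have "multiplicity p ((\<Prod>k=0..m. fact (1 + k) :: nat) * fact (Suc (Suc m)))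
      = multiplicity p (\<Prod>k=0..m. fact (1 + k) :: nat) + ord_fact p (Suc (Suc m))"
    unfolding ord_fact_def using prime by (intro prime_elem_multiplicity_mult_distrib) auto
  then show ?case using Suc by simp
qed simp

lemma hyp_bernoulli_kummer_term_pval_ge:
  assumes "N \<ge> 1" "k > 0" "k \<le> K" "\<not> (p - 1) dvd k"
    and "N - 1 = 0 \<or> multiplicity p (N - 1) \<ge> v + 1 + ord_superfact p K + multiplicity p k"
  shows "pval_ge p (int v + 1)
           ((1 - of_nat p ^ (k - 1)) * hyp_bernoulli N k / of_nat k - kummer_term p k)"
proof (cases "N = 1")
  case False
  define E where "E = v + 1 + ord_superfact p K + multiplicity p k"
  have "p ^ E dvd N - 1" using assms(1,5) False by (intro multiplicity_dvd') (simp add: E_def)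
  then have "[N = 1] (mod p ^ E)" using assms(1) by (simp add: cong_altdef_nat)
  moreover have "p \<ge> 3"
    using prime_ge_2_nat[OF prime] assms(4) by (cases "p = 2") auto
  moreover have "ord_superfact p K < E" by (simp add: E_def)
  moreover have "perturb_loss p k = ord_superfact p k"
    using assms(4) unfolding perturb_loss_def by auto
  ultimately have "pval_ge p (int E - int (ord_superfact p k)) (hyp_bern_coeff N k - hyp_bern_coeff 1 k)"
    using hyp_bern_coeff_perturb assms(3) by metis
  from pval_ge_divide_nat[OF this assms(2)]
  have "pval_ge p (int v + 1) ((hyp_bern_coeff N k - hyp_bern_coeff 1 k) / of_nat k)"
    by (rule pval_ge_mono) (use ord_superfact_mono[OF assms(3), of p] in \<open>simp add: E_def\<close>)
  then have "pval_ge p (0 + (0 + (int v + 1))) (of_int (1 - int p ^ (k - 1)) * (of_nat (fact k)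
               * ((hyp_bern_coeff N k - hyp_bern_coeff 1 k) / of_nat k)))"
    by (intro pval_ge_mult pval_ge_of_int pval_ge_of_nat)
  then show ?thesis unfolding hyp_bernoulli_minus_kummer_term[OF assms(2)] by simp
next
  case True
  then show ?thesis unfolding hyp_bernoulli_minus_kummer_term[OF assms(2)] by (simp add: pval_ge_0)
qed

end

theorem proposition4:
  fixes p \<nu> N m n :: nat
  assumes "prime p"
    and "N \<ge> 1"
    and "m > 0" and "n > 0" and "even m" and "even n" and "m \<ge> n"
    and "[m = n] (mod (p - 1) * p ^ \<nu>)"
    and "\<not> (p - 1) dvd m" and "\<not> (p - 1) dvd n"
    and "N - 1 = 0 \<or>
         multiplicity p (N - 1) \<ge> \<nu> + 1 + multiplicity p (\<Prod>k=0..m. fact (1 + k) :: nat)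
                                 + max (multiplicity p m) (multiplicity p n)"
  shows "qcong p (\<nu> + 1)
           ((1 - of_nat p ^ (m - 1)) * hyp_bernoulli N m / of_nat m)
           ((1 - of_nat p ^ (n - 1)) * hyp_bernoulli N n / of_nat n)"
proof -
  interpret fixed_prime p by unfold_locales (rule assms(1))
  note bound = assms(11)[unfolded multiplicity_prod_fact]
  have m: "pval_ge p (int \<nu> + 1)
          ((1 - of_nat p ^ (m - 1)) * hyp_bernoulli N m / of_nat m - kummer_term p m)"
    by (rule hyp_bernoulli_kummer_term_pval_ge[where K = m]) (use assms bound in auto)
  have n: "pval_ge p (int \<nu> + 1)
          ((1 - of_nat p ^ (n - 1)) * hyp_bernoulli N n / of_nat n - kummer_term p n)"
    by (rule hyp_bernoulli_kummer_term_pval_ge[where K = m]) (use assms bound in auto)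
  have kummer: "pval_ge p (int \<nu> + 1) (kummer_term p m - kummer_term p n)"
    by (rule kummer_congruence) (use assms in \<open>auto simp: cong_altdef_nat\<close>)
  from pval_ge_diff[OF pval_ge_add[OF m kummer] n] show ?thesis
    by (intro qcong_if_pval_ge) (simp add: add.commute)
qed

end
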